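(* Let $A\in B_\infty(L)$, let $\{e_j\}_{j\in\mathbb N}$ be a complete orthonormal system in $L$, and $\Delta_M(A):=\sum_{j=1}^M a(Ae_j)a(\bar e_j)$. Then for every $\Phi\in\mathcal F_0$ the limit $\Delta(A)\Phi:=\lim_{M\to\infty}\Delta_M(A)\Phi$ exists, and for $n\in\mathbb N_0$, $g_1,\dots,g_n\in L$, \[ \Delta(A)\,a^\dagger(g_n)\cdots a^\dagger(g_1)\Omega=\sum_{\substack{k,l=1\\k\neq l}}^n(\bar g_l,Ag_k)\Big(\prod_{m\in\{1,\dots,n\}\setminus\{k,l\}}a^\dagger(g_m)\Big)\Omega , \] where the product is over the creation operators $a^\dagger(g_m)$, $m\ne k,l$ (which commute, so the order is irrelevant), and the sum is zero for $n<2$.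
   Context: $L$ is a separable complex Hilbert space with $\dim L=\infty$, scalar product antilinear in the first argument, and a conjugation $f\mapsto\bar f$ (antilinear involution with $(\bar f,\bar g)=(g,f)$). $B_\infty(L)$ denotes the bounded operators on $L$. $\mathcal F$ carries a Fock representation of the CCR over $L$: on a dense invariant domain $D$ there are operators $a(f),a^\dagger(f)$, linear in $f$, with $[a(f),a(g)]=0=[a^\dagger(f),a^\dagger(g)]$, $[a(f),a^\dagger(g)]=(\bar f,g)\mathrm{id}$, $(a(f)\Phi,\Psi)=(\Phi,a^\dagger(\bar f)\Psi)$, a unit vacuum $\Omega$ with $a(f)\Omega=0$, and $\mathcal F$ is the closure of $\mathcal F_0:=\operatorname{span}\{a^\dagger(f_n)\cdots a^\dagger(f_1)\Omega: n\in\mathbb N_0, f_i\in L\}$. *)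

theory Defs
  imports "HOL-Analysis.Analysis"
begin

text \<open>Complex vector spaces and complex inner product (Hilbert) spaces, given by explicit
  scalar multiplication sm and scalar product ip (antilinear in the first argument)
  on a carrier type of class ab_group_add.\<close>

definition cvs :: "(complex \<Rightarrow> 'v::ab_group_add \<Rightarrow> 'v) \<Rightarrow> bool" where
  "cvs sm \<longleftrightarrow> (\<forall>x. sm 1 x = x) \<and> (\<forall>a b x. sm (a * b) x = sm a (sm b x))
     \<and> (\<forall>a b x. sm (a + b) x = sm a x + sm b x) \<and> (\<forall>a x y. sm a (x + y) = sm a x + sm a y)"

definition cinner_space :: "(complex \<Rightarrow> 'v::ab_group_add \<Rightarrow> 'v) \<Rightarrow> ('v \<Rightarrow> 'v \<Rightarrow> complex) \<Rightarrow> bool" where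
  "cinner_space sm ip \<longleftrightarrow> cvs sm
     \<and> (\<forall>x y z. ip x (y + z) = ip x y + ip x z)
     \<and> (\<forall>x c y. ip x (sm c y) = c * ip x y)
     \<and> (\<forall>x y. ip y x = cnj (ip x y))
     \<and> (\<forall>x. 0 \<le> Re (ip x x))
     \<and> (\<forall>x. ip x x = 0 \<longrightarrow> x = 0)"

definition nrm :: "('v \<Rightarrow> 'v \<Rightarrow> complex) \<Rightarrow> 'v \<Rightarrow> real" where
  "nrm ip x = sqrt (Re (ip x x))"

definition conv_to :: "('v::ab_group_add \<Rightarrow> 'v \<Rightarrow> complex) \<Rightarrow> (nat \<Rightarrow> 'v) \<Rightarrow> 'v \<Rightarrow> bool" where
  "conv_to ip X y \<longleftrightarrow> ((\<lambda>M. nrm ip (X M - y)) \<longlonglongrightarrow> 0)"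

definition chilbert :: "(complex \<Rightarrow> 'v::ab_group_add \<Rightarrow> 'v) \<Rightarrow> ('v \<Rightarrow> 'v \<Rightarrow> complex) \<Rightarrow> bool" where
  "chilbert sm ip \<longleftrightarrow> cinner_space sm ip
     \<and> (\<forall>X. (\<forall>e>0. \<exists>N. \<forall>m\<ge>N. \<forall>n\<ge>N. nrm ip (X m - X n) < e) \<longrightarrow> (\<exists>y. conv_to ip X y))"

definition cspan :: "(complex \<Rightarrow> 'v::ab_group_add \<Rightarrow> 'v) \<Rightarrow> 'v set \<Rightarrow> 'v set" where
  "cspan sm S = {(\<Sum>x\<in>T. sm (c x) x) | T c. finite T \<and> T \<subseteq> S}"

definition ncl :: "('v::ab_group_add \<Rightarrow> 'v \<Rightarrow> complex) \<Rightarrow> 'v set \<Rightarrow> 'v set" where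
  "ncl ip S = {x. \<forall>e>0. \<exists>y\<in>S. nrm ip (x - y) < e}"

definition conjugation :: "(complex \<Rightarrow> 'l::ab_group_add \<Rightarrow> 'l) \<Rightarrow> ('l \<Rightarrow> 'l \<Rightarrow> complex) \<Rightarrow> ('l \<Rightarrow> 'l) \<Rightarrow> bool" where
  "conjugation sm ip cj \<longleftrightarrow> (\<forall>x y. cj (x + y) = cj x + cj y) \<and> (\<forall>c x. cj (sm c x) = sm (cnj c) (cj x))
     \<and> (\<forall>x. cj (cj x) = x) \<and> (\<forall>f g. ip (cj f) (cj g) = ip g f)"

definition bounded_op :: "(complex \<Rightarrow> 'l::ab_group_add \<Rightarrow> 'l) \<Rightarrow> ('l \<Rightarrow> 'l \<Rightarrow> complex) \<Rightarrow> ('l \<Rightarrow> 'l) \<Rightarrow> bool" where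
  "bounded_op sm ip A \<longleftrightarrow> (\<forall>x y. A (x + y) = A x + A y) \<and> (\<forall>c x. A (sm c x) = sm c (A x))
     \<and> (\<exists>C. \<forall>x. nrm ip (A x) \<le> C * nrm ip x)"

definition complete_ons :: "(complex \<Rightarrow> 'l::ab_group_add \<Rightarrow> 'l) \<Rightarrow> ('l \<Rightarrow> 'l \<Rightarrow> complex) \<Rightarrow> (nat \<Rightarrow> 'l) \<Rightarrow> bool" where
  "complete_ons sm ip e \<longleftrightarrow> (\<forall>j\<ge>1. \<forall>k\<ge>1. ip (e j) (e k) = (if j = k then 1 else 0))
     \<and> ncl ip (cspan sm (e ` {1..})) = UNIV"

text \<open>The creation word  a^dagger(g_{m_r}) ... a^dagger(g_{m_1}) Psi  over a finite index set
  I = {m_1 < ... < m_r} (largest index applied last, i.e. leftmost).\<close>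
definition creat :: "('l \<Rightarrow> 'f \<Rightarrow> 'f) \<Rightarrow> (nat \<Rightarrow> 'l) \<Rightarrow> nat set \<Rightarrow> 'f \<Rightarrow> 'f" where
  "creat ad g I \<Psi> = foldr (\<lambda>m \<Phi>. ad (g m) \<Phi>) (rev (sorted_list_of_set I)) \<Psi>"

definition F0 :: "(complex \<Rightarrow> 'f::ab_group_add \<Rightarrow> 'f) \<Rightarrow> ('l \<Rightarrow> 'f \<Rightarrow> 'f) \<Rightarrow> 'f \<Rightarrow> 'f set" where
  "F0 smF ad \<Omega> = cspan smF {creat ad f {1..n} \<Omega> | n f. True}"

definition fock_rep ::
  "(complex \<Rightarrow> 'l::ab_group_add \<Rightarrow> 'l) \<Rightarrow> ('l \<Rightarrow> 'l \<Rightarrow> complex) \<Rightarrow> ('l \<Rightarrow> 'l) \<Rightarrow>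
   (complex \<Rightarrow> 'f::ab_group_add \<Rightarrow> 'f) \<Rightarrow> ('f \<Rightarrow> 'f \<Rightarrow> complex) \<Rightarrow>
   'f set \<Rightarrow> ('l \<Rightarrow> 'f \<Rightarrow> 'f) \<Rightarrow> ('l \<Rightarrow> 'f \<Rightarrow> 'f) \<Rightarrow> 'f \<Rightarrow> bool" where
  "fock_rep smL ipL cj smF ipF D a ad \<Omega> \<longleftrightarrow>
     chilbert smF ipF
     \<and> cspan smF D = D \<and> ncl ipF D = UNIV
     \<and> (\<forall>f. \<forall>\<Phi>\<in>D. a f \<Phi> \<in> D \<and> ad f \<Phi> \<in> D)
     \<and> (\<forall>f. \<forall>\<Phi>\<in>D. \<forall>\<Psi>\<in>D. a f (\<Phi> + \<Psi>) = a f \<Phi> + a f \<Psi> \<and> ad f (\<Phi> + \<Psi>) = ad f \<Phi> + ad f \<Psi>)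
     \<and> (\<forall>f c. \<forall>\<Phi>\<in>D. a f (smF c \<Phi>) = smF c (a f \<Phi>) \<and> ad f (smF c \<Phi>) = smF c (ad f \<Phi>))
     \<and> (\<forall>f g. \<forall>\<Phi>\<in>D. a (f + g) \<Phi> = a f \<Phi> + a g \<Phi> \<and> ad (f + g) \<Phi> = ad f \<Phi> + ad g \<Phi>)
     \<and> (\<forall>f c. \<forall>\<Phi>\<in>D. a (smL c f) \<Phi> = smF c (a f \<Phi>) \<and> ad (smL c f) \<Phi> = smF c (ad f \<Phi>))
     \<and> (\<forall>f g. \<forall>\<Phi>\<in>D. a f (a g \<Phi>) = a g (a f \<Phi>))
     \<and> (\<forall>f g. \<forall>\<Phi>\<in>D. ad f (ad g \<Phi>) = ad g (ad f \<Phi>))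
     \<and> (\<forall>f g. \<forall>\<Phi>\<in>D. a f (ad g \<Phi>) - ad g (a f \<Phi>) = smF (ipL (cj f) g) \<Phi>)
     \<and> (\<forall>f. \<forall>\<Phi>\<in>D. \<forall>\<Psi>\<in>D. ipF (a f \<Phi>) \<Psi> = ipF \<Phi> (ad (cj f) \<Psi>))
     \<and> \<Omega> \<in> D \<and> ipF \<Omega> \<Omega> = 1 \<and> (\<forall>f. a f \<Omega> = 0)
     \<and> ncl ipF (F0 smF ad \<Omega>) = UNIV"

definition DeltaM :: "('l \<Rightarrow> 'l) \<Rightarrow> ('l \<Rightarrow> 'f \<Rightarrow> 'f) \<Rightarrow> ('l \<Rightarrow> 'l) \<Rightarrow> (nat \<Rightarrow> 'l) \<Rightarrow> nat \<Rightarrow> 'f \<Rightarrow> 'f::ab_group_add" where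
  "DeltaM cj a A e M \<Phi> = (\<Sum>j=1..M. a (A (e j)) (a (cj (e j)) \<Phi>))"

end

theory Submission
  imports Defs
begin

text \<open>Commuting annihilators to the right with the CCR gives
  \<open>a(f) a\<^sup>\<dagger>(g\<^sub>n)\<cdots>a\<^sup>\<dagger>(g\<^sub>1)\<Omega> = \<Sum>\<^sub>l (cj f, g\<^sub>l) \<Prod>\<^sub>m\<^sub>\<noteq>\<^sub>l a\<^sup>\<dagger>(g\<^sub>m)\<Omega>\<close>.
  Applying this twice, \<open>\<Delta>\<^sub>M(A)\<close> maps a creation word to a fixed finite combination of the vectors
  \<open>\<Prod>\<^sub>m\<^sub>\<noteq>\<^sub>k\<^sub>,\<^sub>l a\<^sup>\<dagger>(g\<^sub>m)\<Omega>\<close> whose coefficients are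
  \<open>\<Sum>\<^sub>j\<^sub>\<le>\<^sub>M (e\<^sub>j, g\<^sub>k)(cj g\<^sub>l, A e\<^sub>j) = (cj g\<^sub>l, A P\<^sub>M g\<^sub>k)\<close>, where \<open>P\<^sub>M g\<close> is the \<open>M\<close>-th partial
  Fourier sum of \<open>g\<close>. Partial Fourier sums are best approximations from the span of
  \<open>e\<^sub>1, \<dots>, e\<^sub>M\<close>, so for a complete orthonormal system they converge to \<open>g\<close>, and boundedness of \<open>A\<close>
  gives convergence of the coefficients. On all of \<open>F\<^sub>0\<close> the limit exists because the vectors on
  which \<open>\<Delta>\<^sub>M(A)\<close> converges form a subspace containing the creation words.\<close>

locale cinner =
  fixes sm :: "complex \<Rightarrow> 'v::ab_group_add \<Rightarrow> 'v" and ip :: "'v \<Rightarrow> 'v \<Rightarrow> complex"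
  assumes cinner_space: "cinner_space sm ip"
begin

sublocale module sm
  using cinner_space unfolding cinner_space_def cvs_def by unfold_locales auto

lemma cspan_eq_span: "cspan sm S = span S"
  unfolding cspan_def span_explicit ..

lemma ip_add_right: "ip x (y + z) = ip x y + ip x z"
  and ip_scale_right: "ip x (sm c y) = c * ip x y"
  and ip_cnj: "ip y x = cnj (ip x y)"
  and ip_self_Re_nonneg: "0 \<le> Re (ip x x)"
  and ip_self_eq_0: "ip x x = 0 \<Longrightarrow> x = 0"
  using cinner_space unfolding cinner_space_def by meson+

lemma ip_diff_right: "ip x (y - z) = ip x y - ip x z"
  and ip_sum_right: "ip x (sum f S) = (\<Sum>i\<in>S. ip x (f i))"
proof -
  interpret additive "ip x" by standard (rule ip_add_right)
  show "ip x (y - z) = ip x y - ip x z" by (rule diff)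
  show "ip x (sum f S) = (\<Sum>i\<in>S. ip x (f i))" by (rule sum)
qed

lemma ip_add_left: "ip (y + z) x = ip y x + ip z x"
  by (metis complex_cnj_add ip_add_right ip_cnj)

lemma ip_scale_left: "ip (sm c y) x = cnj c * ip y x"
  by (metis complex_cnj_mult ip_scale_right ip_cnj)

lemma ip_diff_left: "ip (y - z) x = ip y x - ip z x"
  by (metis complex_cnj_diff ip_diff_right ip_cnj)

lemma ip_zero_right [simp]: "ip x 0 = 0"
  using ip_scale_right[of x 0 0] by simp

lemma ip_self_real: "ip x x = of_real (Re (ip x x))"
  using ip_cnj[of x x] by (simp add: complex_eq_iff)

lemma nrm_nonneg: "0 \<le> nrm ip x"
  by (simp add: nrm_def ip_self_Re_nonneg)

lemma nrm_square: "(nrm ip x)\<^sup>2 = Re (ip x x)"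
  by (simp add: nrm_def ip_self_Re_nonneg)

lemma nrm_zero [simp]: "nrm ip 0 = 0"
  by (simp add: nrm_def)

lemma Cauchy_Schwarz: "cmod (ip x y) \<le> nrm ip x * nrm ip y"
proof (cases "y = 0")
  case True
  then show ?thesis by simp
next
  case False
  define r where "r = Re (ip y y)"
  have yy: "ip y y = of_real r"
    unfolding r_def by (rule ip_self_real)
  have "r \<noteq> 0"
    using False yy ip_self_eq_0[of y] by auto
  then have "r > 0"
    using ip_self_Re_nonneg[of y] unfolding r_def by linarith
  define u where "u = ip x y"
  have yx: "ip y x = cnj u"
    unfolding u_def by (rule ip_cnj)
  define t where "t = cnj u / of_real r"
  \<comment> \<open>\<open>t\<close> minimises \<open>\<parallel>x - t y\<parallel>\<^sup>2\<close>\<close>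
  have "ip (x - sm t y) (x - sm t y) = ip x x - cnj t * cnj u - t * (u - cnj t * of_real r)"
    unfolding ip_diff_left ip_diff_right ip_scale_left ip_scale_right yy yx u_def[symmetric] ..
  also have "\<dots> = ip x x - u * cnj u / of_real r"
    using \<open>r > 0\<close> by (simp add: t_def field_simps power2_eq_square)
  finally have "Re (ip (x - sm t y) (x - sm t y)) = Re (ip x x) - (cmod u)\<^sup>2 / r"
    by (simp flip: complex_norm_square)
  then have "(cmod u)\<^sup>2 / r \<le> Re (ip x x)"
    using ip_self_Re_nonneg[of "x - sm t y"] by simp
  then have "(cmod u)\<^sup>2 \<le> (nrm ip x * nrm ip y)\<^sup>2"
    using \<open>r > 0\<close> by (simp add: power_mult_distrib nrm_square r_def field_simps)
  then show ?thesis
    unfolding u_def by (rule power2_le_imp_le) (simp add: nrm_nonneg)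
qed

lemma nrm_triangle: "nrm ip (x + y) \<le> nrm ip x + nrm ip y"
proof -
  have "Re (ip (x + y) (x + y)) = Re (ip x x) + Re (ip y y) + 2 * Re (ip x y)"
    using ip_cnj[of y x] by (simp add: ip_add_left ip_add_right)
  also have "\<dots> \<le> (nrm ip x)\<^sup>2 + (nrm ip y)\<^sup>2 + 2 * (nrm ip x * nrm ip y)"
    using complex_Re_le_cmod[of "ip x y"] Cauchy_Schwarz[of x y] unfolding nrm_square by linarith
  finally have "(nrm ip (x + y))\<^sup>2 \<le> (nrm ip x + nrm ip y)\<^sup>2"
    unfolding nrm_square power2_sum by (simp only: mult.assoc)
  then show ?thesis
    using nrm_nonneg by (metis add_nonneg_nonneg power2_le_imp_le)
qed

lemma nrm_scale: "nrm ip (sm c x) = cmod c * nrm ip x"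
proof -
  have "ip (sm c x) (sm c x) = (c * cnj c) * ip x x"
    by (simp add: ip_scale_left ip_scale_right mult_ac)
  then have "Re (ip (sm c x) (sm c x)) = (cmod c)\<^sup>2 * Re (ip x x)"
    by (simp add: complex_mult_cnj cmod_power2)
  then show ?thesis
    unfolding nrm_def by (simp only: real_sqrt_mult real_sqrt_abs abs_norm_cancel)
qed

lemma nrm_minus_commute: "nrm ip (x - y) = nrm ip (y - x)"
  using nrm_scale[of "-1" "y - x"] by simp

lemma conv_to_const: "conv_to ip (\<lambda>M. x) x"
  by (simp add: conv_to_def)

lemma conv_to_add:
  assumes "conv_to ip X x" and "conv_to ip Y y"
  shows "conv_to ip (\<lambda>M. X M + Y M) (x + y)"
  unfolding conv_to_def
proof (rule Lim_null_comparison)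
  have "nrm ip (X M + Y M - (x + y)) \<le> nrm ip (X M - x) + nrm ip (Y M - y)" for M
    using nrm_triangle[of "X M - x" "Y M - y"] by (simp add: algebra_simps)
  then show "\<forall>\<^sub>F M in sequentially. norm (nrm ip (X M + Y M - (x + y)))
      \<le> nrm ip (X M - x) + nrm ip (Y M - y)"
    by (simp add: nrm_nonneg)
  show "(\<lambda>M. nrm ip (X M - x) + nrm ip (Y M - y)) \<longlonglongrightarrow> 0"
    using assms unfolding conv_to_def by (simp add: tendsto_add_zero)
qed

lemma conv_to_sum:
  assumes "finite S" and "\<And>i. i \<in> S \<Longrightarrow> conv_to ip (X i) (x i)"
  shows "conv_to ip (\<lambda>M. \<Sum>i\<in>S. X i M) (\<Sum>i\<in>S. x i)"
  using assms by (induction S rule: finite_induct) (simp_all add: conv_to_const conv_to_add)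

lemma conv_to_scale:
  assumes c: "c \<longlonglongrightarrow> c0" and X: "conv_to ip X x"
  shows "conv_to ip (\<lambda>M. sm (c M) (X M)) (sm c0 x)"
  unfolding conv_to_def
proof (rule Lim_null_comparison)
  have "sm (c M) (X M) - sm c0 x = sm (c M) (X M - x) + sm (c M - c0) x" for M
    by (simp add: algebra_simps)
  then have "nrm ip (sm (c M) (X M) - sm c0 x) \<le> cmod (c M) * nrm ip (X M - x) + cmod (c M - c0) * nrm ip x"
    for M using nrm_triangle[of "sm (c M) (X M - x)" "sm (c M - c0) x"] by (simp add: nrm_scale)
  then show "\<forall>\<^sub>F M in sequentially. norm (nrm ip (sm (c M) (X M) - sm c0 x))
      \<le> cmod (c M) * nrm ip (X M - x) + cmod (c M - c0) * nrm ip x"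
    by (simp add: nrm_nonneg)
  have "(\<lambda>M. cmod (c M) * nrm ip (X M - x) + cmod (c M - c0) * nrm ip x)
      \<longlonglongrightarrow> cmod c0 * 0 + cmod (c0 - c0) * nrm ip x"
    using X unfolding conv_to_def by (intro tendsto_intros c)
  then show "(\<lambda>M. cmod (c M) * nrm ip (X M - x) + cmod (c M - c0) * nrm ip x) \<longlonglongrightarrow> 0"
    by simp
qed

definition fourier_sum :: "(nat \<Rightarrow> 'v) \<Rightarrow> 'v \<Rightarrow> nat \<Rightarrow> 'v" where
  "fourier_sum e g M = (\<Sum>j=1..M. sm (ip (e j) g) (e j))"

lemma fourier_remainder_orthogonal:
  assumes on: "\<forall>j\<in>{1..M}. \<forall>k\<in>{1..M}. ip (e j) (e k) = (if j = k then 1 else 0)"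
  shows "ip (g - fourier_sum e g M) (\<Sum>j=1..M. sm (c j) (e j)) = 0"
proof -
  have "ip (e k) (fourier_sum e g M) = ip (e k) g" if k: "k \<in> {1..M}" for k
  proof -
    have "ip (e k) (fourier_sum e g M) = (\<Sum>j=1..M. ip (e j) g * ip (e k) (e j))"
      by (simp add: fourier_sum_def ip_sum_right ip_scale_right)
    also have "\<dots> = (\<Sum>j\<in>{1..M}. if j = k then ip (e j) g else 0)"
      by (rule sum.cong) (use on k in auto)
    finally show ?thesis
      using k by simp
  qed
  then have "ip (g - fourier_sum e g M) (e j) = 0" if "j \<in> {1..M}" for j
    using that ip_cnj[of "e j" "g - fourier_sum e g M"] by (simp add: ip_diff_right)
  then show ?thesis
    by (simp add: ip_sum_right ip_scale_right)
qed

lemma fourier_sum_best_approximation: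
  assumes on: "\<forall>j\<in>{1..M}. \<forall>k\<in>{1..M}. ip (e j) (e k) = (if j = k then 1 else 0)"
  shows "nrm ip (g - fourier_sum e g M) \<le> nrm ip (g - (\<Sum>j=1..M. sm (c j) (e j)))"
proof -
  let ?P = "fourier_sum e g M" and ?y = "\<Sum>j=1..M. sm (c j) (e j)"
  have "?P - ?y = (\<Sum>j=1..M. sm (ip (e j) g - c j) (e j))"
    by (simp add: fourier_sum_def scale_left_diff_distrib sum_subtractf)
  then have orth: "ip (g - ?P) (?P - ?y) = 0" "ip (?P - ?y) (g - ?P) = 0"
    using fourier_remainder_orthogonal[OF on] ip_cnj[of "g - ?P" "?P - ?y"] by simp_all
  have "Re (ip (g - ?y) (g - ?y)) = Re (ip (g - ?P) (g - ?P)) + Re (ip (?P - ?y) (?P - ?y))"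
    using ip_add_left[of "g - ?P" "?P - ?y"] ip_add_right[of _ "g - ?P" "?P - ?y"] orth by simp
  then show ?thesis
    using ip_self_Re_nonneg[of "?P - ?y"] by (simp add: nrm_def)
qed

lemma span_eventually_finite_sum:
  assumes "y \<in> span (e ` {(1::nat)..})"
  shows "\<exists>N d. \<forall>M\<ge>N. y = (\<Sum>j=1..M. sm (d j) (e j))"
proof -
  define R where "R = {y. \<exists>N d. \<forall>M\<ge>N. y = (\<Sum>j=1..M. sm (d j) (e j))}"
  have "subspace R"
  proof (rule subspaceI)
    show "0 \<in> R"
      unfolding R_def by (rule CollectI, rule exI[of _ 0], rule exI[of _ "\<lambda>_. 0"]) simp
  next
    fix x y assume "x \<in> R" "y \<in> R"
    then obtain N d N' d' where "\<forall>M\<ge>N. x = (\<Sum>j=1..M. sm (d j) (e j))"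
      "\<forall>M\<ge>N'. y = (\<Sum>j=1..M. sm (d' j) (e j))"
      unfolding R_def by blast
    then have "\<forall>M\<ge>max N N'. x + y = (\<Sum>j=1..M. sm (d j + d' j) (e j))"
      by (auto simp: scale_left_distrib sum.distrib)
    then show "x + y \<in> R"
      unfolding R_def by (intro CollectI exI[of _ "max N N'"] exI[of _ "\<lambda>j. d j + d' j"])
  next
    fix c x assume "x \<in> R"
    then obtain N d where "\<forall>M\<ge>N. x = (\<Sum>j=1..M. sm (d j) (e j))"
      unfolding R_def by blast
    then have "\<forall>M\<ge>N. sm c x = (\<Sum>j=1..M. sm (c * d j) (e j))"
      by (simp add: scale_sum_right)
    then show "sm c x \<in> R"
      unfolding R_def by (intro CollectI exI[of _ N] exI[of _ "\<lambda>j. c * d j"])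
  qed
  moreover have "e k \<in> R" if "k \<ge> 1" for k
  proof -
    have "e k = (\<Sum>j=1..M. sm (if j = k then 1 else 0) (e j))" if "k \<le> M" for M
    proof -
      have "(\<Sum>j=1..M. sm (if j = k then 1 else 0) (e j)) = (\<Sum>j=1..M. if j = k then e k else 0)"
        by (rule sum.cong) simp_all
      then show ?thesis
        using \<open>k \<ge> 1\<close> that by simp
    qed
    then show ?thesis
      unfolding R_def by (intro CollectI exI[of _ k] exI[of _ "\<lambda>j. if j = k then 1 else 0"] allI impI)
  qed
  ultimately have "span (e ` {1..}) \<subseteq> R"
    by (intro span_minimal) auto
  then show ?thesis
    using assms unfolding R_def by blast
qed

lemma fourier_sum_conv_to:
  assumes "complete_ons sm ip e"
  shows "conv_to ip (fourier_sum e g) g"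
  unfolding conv_to_def
proof (rule LIMSEQ_I)
  fix r :: real assume "0 < r"
  have on: "\<forall>j\<ge>1. \<forall>k\<ge>1. ip (e j) (e k) = (if j = k then 1 else 0)"
    and dense: "ncl ip (span (e ` {1..})) = UNIV"
    using assms unfolding complete_ons_def cspan_eq_span by auto
  obtain y where y: "y \<in> span (e ` {1..})" and gy: "nrm ip (g - y) < r"
    using dense \<open>0 < r\<close> unfolding ncl_def by blast
  obtain N d where Nd: "\<forall>M\<ge>N. y = (\<Sum>j=1..M. sm (d j) (e j))"
    using span_eventually_finite_sum[OF y] by blast
  have "nrm ip (fourier_sum e g M - g) < r" if "M \<ge> N" for M
  proof -
    have "nrm ip (g - fourier_sum e g M) \<le> nrm ip (g - y)"
      using Nd that fourier_sum_best_approximation[of M e g d] on by auto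
    then show ?thesis
      using gy nrm_minus_commute[of g] by simp
  qed
  then show "\<exists>N. \<forall>M\<ge>N. norm (nrm ip (fourier_sum e g M - g) - 0) < r"
    using nrm_nonneg by auto
qed

lemma bounded_op_ip_tendsto:
  assumes A: "bounded_op sm ip A" and X: "conv_to ip X x"
  shows "(\<lambda>M. ip h (A (X M))) \<longlonglongrightarrow> ip h (A x)"
proof -
  interpret A: additive A
    using A unfolding bounded_op_def by unfold_locales meson
  obtain C where C: "\<And>x. nrm ip (A x) \<le> C * nrm ip x"
    using A unfolding bounded_op_def by meson
  have bound: "cmod (ip h (A (X M)) - ip h (A x)) \<le> nrm ip h * (C * nrm ip (X M - x))" for M
  proof -
    have "cmod (ip h (A (X M)) - ip h (A x)) \<le> nrm ip h * nrm ip (A (X M - x))"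
      using Cauchy_Schwarz[of h "A (X M - x)"] by (simp add: ip_diff_right A.diff)
    also have "\<dots> \<le> nrm ip h * (C * nrm ip (X M - x))"
      by (rule mult_left_mono[OF C nrm_nonneg])
    finally show ?thesis .
  qed
  have "(\<lambda>M. nrm ip h * (C * nrm ip (X M - x))) \<longlonglongrightarrow> 0"
    using X unfolding conv_to_def by (intro tendsto_mult_right_zero)
  then have "(\<lambda>M. ip h (A (X M)) - ip h (A x)) \<longlonglongrightarrow> 0"
    by (rule Lim_null_comparison[OF always_eventually[OF allI[OF bound]]])
  then show ?thesis
    by (simp add: LIM_zero_iff)
qed

lemma fourier_coefficient_sum_tendsto:
  assumes e: "complete_ons sm ip e" and A: "bounded_op sm ip A"
  shows "(\<lambda>M. \<Sum>j=1..M. ip (e j) g * ip h (A (e j))) \<longlonglongrightarrow> ip h (A g)"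
proof -
  interpret A: module_hom sm sm A
    using A module_axioms unfolding bounded_op_def module_hom_iff by meson
  have "(\<Sum>j=1..M. ip (e j) g * ip h (A (e j))) = ip h (A (fourier_sum e g M))" for M
    by (simp add: fourier_sum_def A.sum A.scale ip_sum_right ip_scale_right)
  then show ?thesis
    using bounded_op_ip_tendsto[OF A fourier_sum_conv_to[OF e]] by simp
qed

end

lemma (in module) sum_scale_hom_on_subspace:
  assumes "subspace D"
    and add: "\<And>x y. x \<in> D \<Longrightarrow> y \<in> D \<Longrightarrow> T (x + y) = T x + T y"
    and scale: "\<And>c x. x \<in> D \<Longrightarrow> T (scale c x) = scale c (T x)"
    and "\<And>i. i \<in> S \<Longrightarrow> \<phi> i \<in> D"
  shows "T (\<Sum>i\<in>S. scale (c i) (\<phi> i)) = (\<Sum>i\<in>S. scale (c i) (T (\<phi> i)))"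
  using assms(4)
proof (induction S rule: infinite_finite_induct)
  case (insert j S)
  have "(\<Sum>i\<in>S. scale (c i) (\<phi> i)) \<in> D"
    using insert.prems \<open>subspace D\<close> by (auto intro: subspace_sum subspace_scale)
  then show ?case
    using insert \<open>subspace D\<close> by (simp add: add scale subspace_scale)
qed (use scale[of 0 0] subspace_0[OF \<open>subspace D\<close>] in simp_all)

lemma sorted_list_of_set_insert_greater:
  fixes I :: "'a::linorder set"
  assumes "finite I" and "\<forall>i\<in>I. i < b"
  shows "sorted_list_of_set (insert b I) = sorted_list_of_set I @ [b]"
proof -
  have "sorted_wrt (<) (sorted_list_of_set I @ [b]) \<and> set (sorted_list_of_set I @ [b]) = insert b I
      \<and> length (sorted_list_of_set I @ [b]) = card (insert b I)"
    using assms by (auto simp: sorted_wrt_append card_insert_if)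
  then show ?thesis
    using assms(1) by (simp only: sorted_list_of_set_unique finite_insert)
qed

lemma creat_insert_greater:
  assumes "finite I" and "\<forall>i\<in>I. i < b"
  shows "creat ad g (insert b I) \<Psi> = ad (g b) (creat ad g I \<Psi>)"
  unfolding creat_def sorted_list_of_set_insert_greater[OF assms] by simp

locale fock =
  fixes smL :: "complex \<Rightarrow> 'l::ab_group_add \<Rightarrow> 'l" and ipL :: "'l \<Rightarrow> 'l \<Rightarrow> complex"
    and cj :: "'l \<Rightarrow> 'l"
    and smF :: "complex \<Rightarrow> 'f::ab_group_add \<Rightarrow> 'f" and ipF :: "'f \<Rightarrow> 'f \<Rightarrow> complex"
    and D :: "'f set" and a ad :: "'l \<Rightarrow> 'f \<Rightarrow> 'f" and \<Omega> :: 'f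
  assumes fock_rep: "fock_rep smL ipL cj smF ipF D a ad \<Omega>"
begin

sublocale F: cinner smF ipF
  using fock_rep unfolding fock_rep_def chilbert_def by unfold_locales meson

lemma subspace_D: "F.subspace D"
  using fock_rep unfolding fock_rep_def F.cspan_eq_span F.span_eq_iff by meson

lemma a_in_D: "\<Phi> \<in> D \<Longrightarrow> a f \<Phi> \<in> D"
  and ad_in_D: "\<Phi> \<in> D \<Longrightarrow> ad f \<Phi> \<in> D"
  and a_add: "\<Phi> \<in> D \<Longrightarrow> \<Psi> \<in> D \<Longrightarrow> a f (\<Phi> + \<Psi>) = a f \<Phi> + a f \<Psi>"
  and ad_add: "\<Phi> \<in> D \<Longrightarrow> \<Psi> \<in> D \<Longrightarrow> ad f (\<Phi> + \<Psi>) = ad f \<Phi> + ad f \<Psi>"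
  and a_scale: "\<Phi> \<in> D \<Longrightarrow> a f (smF c \<Phi>) = smF c (a f \<Phi>)"
  and ad_scale: "\<Phi> \<in> D \<Longrightarrow> ad f (smF c \<Phi>) = smF c (ad f \<Phi>)"
  and a_ad_commutator: "\<Phi> \<in> D \<Longrightarrow> a f (ad g \<Phi>) - ad g (a f \<Phi>) = smF (ipL (cj f) g) \<Phi>"
  and vacuum_in_D: "\<Omega> \<in> D"
  and a_vacuum: "a f \<Omega> = 0"
  using fock_rep unfolding fock_rep_def by (elim conjE; simp)+

lemma a_ad_commute: "\<Phi> \<in> D \<Longrightarrow> a f (ad g \<Phi>) = ad g (a f \<Phi>) + smF (ipL (cj f) g) \<Phi>"
  using a_ad_commutator by (simp add: diff_eq_eq add.commute)

lemma a_sum: "(\<And>i. i \<in> S \<Longrightarrow> \<phi> i \<in> D) \<Longrightarrow>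
    a f (\<Sum>i\<in>S. smF (c i) (\<phi> i)) = (\<Sum>i\<in>S. smF (c i) (a f (\<phi> i)))"
  by (rule F.sum_scale_hom_on_subspace[OF subspace_D a_add a_scale])

lemma ad_sum: "(\<And>i. i \<in> S \<Longrightarrow> \<phi> i \<in> D) \<Longrightarrow>
    ad f (\<Sum>i\<in>S. smF (c i) (\<phi> i)) = (\<Sum>i\<in>S. smF (c i) (ad f (\<phi> i)))"
  by (rule F.sum_scale_hom_on_subspace[OF subspace_D ad_add ad_scale])

lemma creat_in_D: "creat ad g I \<Omega> \<in> D"
proof -
  have "foldr (\<lambda>m \<Phi>. ad (g m) \<Phi>) xs \<Omega> \<in> D" for xs
    by (induction xs) (simp_all add: vacuum_in_D ad_in_D)
  then show ?thesis
    unfolding creat_def .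
qed

lemma a_creat:
  assumes "finite I"
  shows "a f (creat ad g I \<Omega>) = (\<Sum>l\<in>I. smF (ipL (cj f) (g l)) (creat ad g (I - {l}) \<Omega>))"
  using assms
proof (induction I rule: finite_linorder_max_induct)
  case empty
  then show ?case by (simp add: creat_def a_vacuum)
next
  case (insert b I)
  have "b \<notin> I"
    using insert.hyps by auto
  have creat_b: "creat ad g (insert b J) \<Omega> = ad (g b) (creat ad g J \<Omega>)" if "J \<subseteq> I" for J
    using insert.hyps that by (intro creat_insert_greater) (auto intro: finite_subset)
  have "a f (creat ad g (insert b I) \<Omega>)
      = ad (g b) (a f (creat ad g I \<Omega>)) + smF (ipL (cj f) (g b)) (creat ad g I \<Omega>)"
    unfolding creat_b[OF order_refl] by (rule a_ad_commute[OF creat_in_D])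
  also have "ad (g b) (a f (creat ad g I \<Omega>))
      = (\<Sum>l\<in>I. smF (ipL (cj f) (g l)) (ad (g b) (creat ad g (I - {l}) \<Omega>)))"
    unfolding insert.IH by (rule ad_sum[OF creat_in_D])
  also have "\<dots> = (\<Sum>l\<in>I. smF (ipL (cj f) (g l)) (creat ad g (insert b I - {l}) \<Omega>))"
    using \<open>b \<notin> I\<close> by (intro sum.cong refl) (auto simp: creat_b insert_Diff_if)
  finally show ?case
    using insert.hyps \<open>b \<notin> I\<close> by (simp add: add.commute)
qed

end

locale fock_delta = fock smL ipL cj smF ipF D a ad \<Omega>
  for smL :: "complex \<Rightarrow> 'l::ab_group_add \<Rightarrow> 'l" and ipL cj
    and smF :: "complex \<Rightarrow> 'f::ab_group_add \<Rightarrow> 'f" and ipF D a ad \<Omega> +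
  fixes A :: "'l \<Rightarrow> 'l" and e :: "nat \<Rightarrow> 'l"
  assumes cinner_L: "cinner_space smL ipL"
    and conjugation: "conjugation smL ipL cj"
    and bounded_A: "bounded_op smL ipL A"
    and complete_e: "complete_ons smL ipL e"
begin

sublocale L: cinner smL ipL
  by (rule cinner.intro[OF cinner_L])

lemma DeltaM_add: "\<Phi> \<in> D \<Longrightarrow> \<Psi> \<in> D \<Longrightarrow>
    DeltaM cj a A e M (\<Phi> + \<Psi>) = DeltaM cj a A e M \<Phi> + DeltaM cj a A e M \<Psi>"
  by (simp add: DeltaM_def a_add a_in_D sum.distrib)

lemma DeltaM_scale: "\<Phi> \<in> D \<Longrightarrow> DeltaM cj a A e M (smF c \<Phi>) = smF c (DeltaM cj a A e M \<Phi>)"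
  by (simp add: DeltaM_def a_scale a_in_D F.scale_sum_right)

lemma DeltaM_creat:
  assumes "finite I"
  shows "DeltaM cj a A e M (creat ad g I \<Omega>) =
    (\<Sum>(k, l)\<in>Sigma I (\<lambda>k. I - {k}).
       smF (\<Sum>j=1..M. ipL (e j) (g k) * ipL (cj (g l)) (A (e j))) (creat ad g (I - {k, l}) \<Omega>))"
proof -
  have cj_cj: "cj (cj x) = x" and cj_A: "ipL (cj (A (e j))) (g l) = ipL (cj (g l)) (A (e j))" for x j l
    using conjugation unfolding conjugation_def by metis+
  have "I - {k} - {l} = I - {k, l}" for k l
    by auto
  then have two_annihilators: "a (A (e j)) (a (cj (e j)) (creat ad g I \<Omega>)) =
     (\<Sum>(k, l)\<in>Sigma I (\<lambda>k. I - {k}).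
       smF (ipL (e j) (g k) * ipL (cj (g l)) (A (e j))) (creat ad g (I - {k, l}) \<Omega>))" for j
    using assms by (simp add: a_creat a_sum creat_in_D cj_cj cj_A F.scale_sum_right sum.Sigma)
  have "DeltaM cj a A e M (creat ad g I \<Omega>) = (\<Sum>(k, l)\<in>Sigma I (\<lambda>k. I - {k}). \<Sum>j=1..M.
       smF (ipL (e j) (g k) * ipL (cj (g l)) (A (e j))) (creat ad g (I - {k, l}) \<Omega>))"
    unfolding DeltaM_def two_annihilators by (subst sum.swap) (simp add: case_prod_beta)
  then show ?thesis
    by (simp add: F.scale_sum_left case_prod_beta)
qed

lemma DeltaM_creat_conv_to:
  "conv_to ipF (\<lambda>M. DeltaM cj a A e M (creat ad g {1..n} \<Omega>))
     (\<Sum>(k, l)\<in>{(k, l). k \<in> {1..n} \<and> l \<in> {1..n} \<and> k \<noteq> l}.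
        smF (ipL (cj (g l)) (A (g k))) (creat ad g ({1..n} - {k, l}) \<Omega>))"
proof -
  have pairs: "{(k, l). k \<in> {1..n} \<and> l \<in> {1..n} \<and> k \<noteq> l} = Sigma {1..n} (\<lambda>k. {1..n} - {k})"
    by auto
  have "conv_to ipF (\<lambda>M. smF (\<Sum>j=1..M. ipL (e j) (g k) * ipL (cj (g l)) (A (e j))) \<Psi>)
      (smF (ipL (cj (g l)) (A (g k))) \<Psi>)" for k l \<Psi>
    by (intro F.conv_to_scale F.conv_to_const L.fourier_coefficient_sum_tendsto complete_e bounded_A)
  then show ?thesis
    unfolding pairs DeltaM_creat[OF finite_atLeastAtMost]
    by (intro F.conv_to_sum) (auto simp: case_prod_beta)
qed

lemma DeltaM_conv_to_on_F0:
  assumes "\<Phi> \<in> F0 smF ad \<Omega>"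
  shows "\<exists>\<Psi>. conv_to ipF (\<lambda>M. DeltaM cj a A e M \<Phi>) \<Psi>"
proof -
  define C where "C = {\<Phi> \<in> D. \<exists>\<Psi>. conv_to ipF (\<lambda>M. DeltaM cj a A e M \<Phi>) \<Psi>}"
  have "F.subspace C"
  proof (rule F.subspaceI)
    have "DeltaM cj a A e M 0 = 0" for M
      using DeltaM_scale[of 0 M 0] F.subspace_0[OF subspace_D] by simp
    then show "0 \<in> C"
      unfolding C_def using F.subspace_0[OF subspace_D] F.conv_to_const by auto
  next
    fix \<Phi> \<Psi> assume "\<Phi> \<in> C" "\<Psi> \<in> C"
    then show "\<Phi> + \<Psi> \<in> C"
      unfolding C_def using F.subspace_add[OF subspace_D]
      by (auto simp: DeltaM_add intro: F.conv_to_add)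
  next
    fix c \<Phi> assume "\<Phi> \<in> C"
    then show "smF c \<Phi> \<in> C"
      unfolding C_def using F.subspace_scale[OF subspace_D]
      by (auto simp: DeltaM_scale intro: F.conv_to_scale[OF tendsto_const])
  qed
  moreover have "{creat ad f {1..n} \<Omega> | n f. True} \<subseteq> C"
    unfolding C_def using creat_in_D DeltaM_creat_conv_to by blast
  ultimately have "F.span {creat ad f {1..n} \<Omega> | n f. True} \<subseteq> C"
    by (rule F.span_minimal[rotated])
  then show ?thesis
    using assms unfolding F0_def F.cspan_eq_span C_def by blast
qed

end

theorem lemma5p5:
  fixes smL :: "complex \<Rightarrow> 'l::ab_group_add \<Rightarrow> 'l" and ipL :: "'l \<Rightarrow> 'l \<Rightarrow> complex"
    and cj :: "'l \<Rightarrow> 'l"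
    and smF :: "complex \<Rightarrow> 'f::ab_group_add \<Rightarrow> 'f" and ipF :: "'f \<Rightarrow> 'f \<Rightarrow> complex"
    and D :: "'f set" and a ad :: "'l \<Rightarrow> 'f \<Rightarrow> 'f" and \<Omega> :: 'f
    and A :: "'l \<Rightarrow> 'l" and e :: "nat \<Rightarrow> 'l"
  assumes L: "chilbert smL ipL"
    and cj: "conjugation smL ipL cj"
    and fock: "fock_rep smL ipL cj smF ipF D a ad \<Omega>"
    and A: "bounded_op smL ipL A"
    and e: "complete_ons smL ipL e"
  shows "(\<forall>\<Phi>\<in>F0 smF ad \<Omega>. \<exists>\<Psi>. conv_to ipF (\<lambda>M. DeltaM cj a A e M \<Phi>) \<Psi>)
    \<and> (\<forall>(n::nat) (g::nat \<Rightarrow> 'l).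
         conv_to ipF (\<lambda>M. DeltaM cj a A e M (creat ad g {1..n} \<Omega>))
           (\<Sum>(k, l)\<in>{(k, l). k \<in> {1..n} \<and> l \<in> {1..n} \<and> k \<noteq> l}.
              smF (ipL (cj (g l)) (A (g k))) (creat ad g ({1..n} - {k, l}) \<Omega>)))"
proof -
  have "cinner_space smL ipL"
    using L unfolding chilbert_def by simp
  then interpret fock_delta smL ipL cj smF ipF D a ad \<Omega> A e
    using cj fock A e by unfold_locales
  show ?thesis
    using DeltaM_conv_to_on_F0 DeltaM_creat_conv_to by blast
qed

end
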